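(* Consider the stochastic bipartite matching model described in the context, under the stability condition, with stationary distribution $\pi$. Then for every $\mathcal{A} \in \mathcal{J}$, \[ \Delta(\mathcal{A})\, \pi(\mathcal{A}) = \mu(\mathcal{A}\cap\mathcal{K}) \sum_{i \in \mathcal{A}\cap\mathcal{I}} \lambda_i\, \pi(\mathcal{A}\setminus\{i\}) + \lambda(\mathcal{A}\cap\mathcal{I}) \sum_{k \in \mathcal{A}\cap\mathcal{K}} \mu_k\, \pi(\mathcal{A}\setminus\{k\}) + \sum_{i \in \mathcal{A}\cap\mathcal{I}} \sum_{k\in\mathcal{A}\cap\mathcal{K}} \lambda_i \mu_k\, \pi(\mathcal{A}\setminus\{i,k\}). \]
   Context: Let $\mathcal{I}$ (customer classes) and $\mathcal{K}$ (server classes) be disjoint finite non-empty sets, and consider a connected bipartite graph (the compatibility graph) on $\mathcal{I}\cup\mathcal{K}$ whose edges all join an element of $\mathcal{I}$ to an element of $\mathcal{K}$; write $i\sim k$ if $i\in\mathcal{I}$ and $k\in\mathcal{K}$ are adjacent and $i\nsim k$ otherwise. For $i\in\mathcal{I}$ let $\mathcal{K}_i=\{k\in\mathcal{K}: i\sim k\}$ and for $k\in\mathcal{K}$ let $\mathcal{I}_k=\{i\in\mathcal{I}: i\sim k\}$. Let $\lambda_i>0$ ($i\in\mathcal{I}$) and $\mu_k>0$ ($k\in\mathcal{K}$) with $\sum_i\lambda_i=\sum_k\mu_k=1$. For $\mathcal{A}\subseteq\mathcal{I}$ write $\lambda(\mathcal{A})=\sum_{i\in\mathcal{A}}\lambda_i$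 and $\mathcal{K}(\mathcal{A})=\bigcup_{i\in\mathcal{A}}\mathcal{K}_i$; for $\mathcal{A}\subseteq\mathcal{K}$ write $\mu(\mathcal{A})=\sum_{k\in\mathcal{A}}\mu_k$ and $\mathcal{I}(\mathcal{A})=\bigcup_{k\in\mathcal{A}}\mathcal{I}_k$. Model: time is slotted; in each slot exactly one customer and one server arrive, the customer being of class $i$ with probability $\lambda_i$ and the server of class $k$ with probability $\mu_k$, independently within and across slots. Unmatched customers and unmatched servers wait in two queues in arrival order. Upon each arrival (first-come-first-matched policy): (1) the incoming customer is matched with the longest-waiting compatible unmatched server, if any; (2) the incoming server is matched with the longest-waiting compatible unmatched customer, if any; (3) if neither can be matched with a waiting item, they are matched with each other if compatible; (4) any incoming item still unmatched is appended to the back of its queue. Matched items leave immediately. The state is $(c,d)$ with $c=(c_1,\dots,c_n)$ the classes of unmatched customers and $d=(d_1,\dots,d_n)$ the classes of unmatched servers, in arrival order (the two lengths are always equal); the state space is $\Pi=\bigcup_{n\ge0}\{(c,d)\in\mathcal{I}^n\times\mathcal{K}^n: c_p\nsim d_q\ \forall p,q\}$, and $\varnothing$ denotes the empty state. Stability condition (assumed): $\lambda(\mathcal{A})<\mu(\mathcal{K}(\mathcal{A}))$ for every non-empty $\mathcal{A}\subsetneq\mathcal{I}$ (equivalently $\mu(\mathcal{A})<\lambda(\mathcal{I}(\mathcal{A}))$ for every non-empty $\mathcal{A}\subsetneq\mathcal{K}$). Then the Markov chain of states is ergodic with stationary distribution $\pi(c,d)=\pi(\varnothing)\prod_{p=1}^n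 \frac{\lambda_{c_p}}{\mu(\mathcal{K}(\{c_1,\dots,c_p\}))}\frac{\mu_{d_p}}{\lambda(\mathcal{I}(\{d_1,\dots,d_p\}))}$, $(c,d)\in\Pi$. Let $\mathcal{J}$ be the family of independent sets $\mathcal{A}\subseteq\mathcal{I}\cup\mathcal{K}$ of the compatibility graph such that $\mathcal{A}\cap\mathcal{I}$ and $\mathcal{A}\cap\mathcal{K}$ are both non-empty, and $\mathcal{J}_0=\mathcal{J}\cup\{\emptyset\}$. For $\mathcal{A}\in\mathcal{J}_0$, let $\Pi_{\mathcal{A}}$ be the set of $(c,d)\in\Pi$ with $\{c_1,\dots,c_n\}=\mathcal{A}\cap\mathcal{I}$ and $\{d_1,\dots,d_n\}=\mathcal{A}\cap\mathcal{K}$, and $\pi(\mathcal{A})=\sum_{(c,d)\in\Pi_{\mathcal{A}}}\pi(c,d)$; by convention $\pi(\mathcal{A})=0$ if $\mathcal{A}\notin\mathcal{J}_0$. For $\mathcal{A}\in\mathcal{J}$, $\Delta(\mathcal{A})=\mu(\mathcal{K}(\mathcal{A}\cap\mathcal{I}))\,\lambda(\mathcal{I}(\mathcal{A}\cap\mathcal{K}))-\lambda(\mathcal{A}\cap\mathcal{I})\,\mu(\mathcal{A}\cap\mathcal{K})$. *)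

theory Defs
  imports "HOL-Analysis.Analysis"
begin

text \<open>Customer classes are the elements of a finite type 'i, server classes those of a
finite type 'k; the compatibility graph is the relation cmp i k (i ~ k).\<close>

definition Kset :: "('i \<Rightarrow> 'k \<Rightarrow> bool) \<Rightarrow> 'i set \<Rightarrow> 'k set" where
  "Kset cmp A = {k. \<exists>i\<in>A. cmp i k}"

definition Iset :: "('i \<Rightarrow> 'k \<Rightarrow> bool) \<Rightarrow> 'k set \<Rightarrow> 'i set" where
  "Iset cmp B = {i. \<exists>k\<in>B. cmp i k}"

fun adj :: "('i \<Rightarrow> 'k \<Rightarrow> bool) \<Rightarrow> 'i + 'k \<Rightarrow> 'i + 'k \<Rightarrow> bool" where
  "adj cmp (Inl i) (Inr k) = cmp i k"
| "adj cmp (Inr k) (Inl i) = cmp i k"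
| "adj cmp _ _ = False"

definition graph_connected :: "('i \<Rightarrow> 'k \<Rightarrow> bool) \<Rightarrow> bool" where
  "graph_connected cmp \<longleftrightarrow> (\<forall>x y. (adj cmp)\<^sup>*\<^sup>* x y)"

definition states :: "('i \<Rightarrow> 'k \<Rightarrow> bool) \<Rightarrow> ('i list \<times> 'k list) set" where
  "states cmp = {(c, d). length c = length d \<and> (\<forall>x\<in>set c. \<forall>y\<in>set d. \<not> cmp x y)}"

definition weight :: "('i \<Rightarrow> real) \<Rightarrow> ('k \<Rightarrow> real) \<Rightarrow> ('i \<Rightarrow> 'k \<Rightarrow> bool)
    \<Rightarrow> 'i list \<times> 'k list \<Rightarrow> real" where
  "weight lam mu cmp s =
     (\<Prod>p<length (fst s).
        lam (fst s ! p) / sum mu (Kset cmp (set (take (Suc p) (fst s))))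
      * (mu (snd s ! p) / sum lam (Iset cmp (set (take (Suc p) (snd s))))))"

text \<open>Stationary distribution: pi(empty) is the normalising constant.\<close>
definition stat :: "('i \<Rightarrow> real) \<Rightarrow> ('k \<Rightarrow> real) \<Rightarrow> ('i \<Rightarrow> 'k \<Rightarrow> bool)
    \<Rightarrow> 'i list \<times> 'k list \<Rightarrow> real" where
  "stat lam mu cmp s = weight lam mu cmp s / infsum (weight lam mu cmp) (states cmp)"

text \<open>pi(A) for A given by its customer part AI and server part AK.\<close>
definition piA :: "('i \<Rightarrow> real) \<Rightarrow> ('k \<Rightarrow> real) \<Rightarrow> ('i \<Rightarrow> 'k \<Rightarrow> bool)
    \<Rightarrow> 'i set \<Rightarrow> 'k set \<Rightarrow> real" where
  "piA lam mu cmp AI AK =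
     infsum (stat lam mu cmp) {s \<in> states cmp. set (fst s) = AI \<and> set (snd s) = AK}"

definition Delta :: "('i \<Rightarrow> real) \<Rightarrow> ('k \<Rightarrow> real) \<Rightarrow> ('i \<Rightarrow> 'k \<Rightarrow> bool)
    \<Rightarrow> 'i set \<Rightarrow> 'k set \<Rightarrow> real" where
  "Delta lam mu cmp AI AK =
     sum mu (Kset cmp AI) * sum lam (Iset cmp AK) - sum lam AI * sum mu AK"

end

theory Submission
  imports Defs
begin

text \<open>Every state with class sets \<open>A\<close> arises in exactly one way by appending a customer
\<open>i \<in> A \<inter> \<I>\<close> and a server \<open>k \<in> A \<inter> \<K>\<close> to a state whose class sets are \<open>A\<close>, \<open>A - {i}\<close>,
\<open>A - {k}\<close> or \<open>A - {i, k}\<close>, and the product form of \<open>\<pi>\<close> multiplies the weight of that shorter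
state by \<open>\<lambda>\<^sub>i \<mu>\<^sub>k / (\<mu>(\<K>(A \<inter> \<I>)) \<lambda>(\<I>(A \<inter> \<K>)))\<close>. Summing over all states in \<open>\<Pi>\<^sub>A\<close> gives
\<open>\<mu>(\<K>(A \<inter> \<I>)) \<lambda>(\<I>(A \<inter> \<K>)) \<pi>(A)\<close> as the sum of \<open>\<lambda>\<^sub>i \<mu>\<^sub>k\<close> times the four values of \<open>\<pi>\<close>;
moving the term \<open>\<lambda>(A \<inter> \<I>) \<mu>(A \<inter> \<K>) \<pi>(A)\<close> to the left yields \<open>\<Delta>(A) \<pi>(A)\<close>.\<close>

lemma weight_snoc:
  assumes "length c = length d"
  shows "weight lam mu cmp (c @ [i], d @ [k]) = weight lam mu cmp (c, d) *
    (lam i / sum mu (Kset cmp (insert i (set c))) * (mu k / sum lam (Iset cmp (insert k (set d)))))"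
  using assms unfolding weight_def
  by (auto simp: prod.lessThan_Suc nth_append intro!: prod.cong)

definition states_with :: "('i \<Rightarrow> 'k \<Rightarrow> bool) \<Rightarrow> 'i set \<Rightarrow> 'k set \<Rightarrow> ('i list \<times> 'k list) set" where
  "states_with cmp A B = {s \<in> states cmp. set (fst s) = A \<and> set (snd s) = B}"

lemma states_with_subset: "states_with cmp A B \<subseteq> states cmp"
  unfolding states_with_def by auto

lemma states_with_disjoint:
  "(A, B) \<noteq> (A', B') \<Longrightarrow> states_with cmp A B \<inter> states_with cmp A' B' = {}"
  unfolding states_with_def by auto

definition snoc_pair :: "('i \<times> 'k) \<times> ('i list \<times> 'k list) \<Rightarrow> 'i list \<times> 'k list" where
  "snoc_pair = (\<lambda>((i, k), (c, d)). (c @ [i], d @ [k]))"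

definition predecessors ::
    "('i \<Rightarrow> 'k \<Rightarrow> bool) \<Rightarrow> 'i set \<Rightarrow> 'k set \<Rightarrow> 'i \<Rightarrow> 'k \<Rightarrow> ('i list \<times> 'k list) set" where
  "predecessors cmp AI AK i k =
     {s \<in> states cmp. insert i (set (fst s)) = AI \<and> insert k (set (snd s)) = AK}"

lemma snoc_pair_bij_betw_states_with:
  assumes "AI \<noteq> {}" "AK \<noteq> {}" and indep: "\<forall>i\<in>AI. \<forall>k\<in>AK. \<not> cmp i k"
  shows "bij_betw snoc_pair (SIGMA (i, k):AI \<times> AK. predecessors cmp AI AK i k)
    (states_with cmp AI AK)"
proof (rule bij_betw_imageI)
  show "inj_on snoc_pair (SIGMA (i, k):AI \<times> AK. predecessors cmp AI AK i k)"
    by (auto simp: inj_on_def snoc_pair_def)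
next
  show "snoc_pair ` (SIGMA (i, k):AI \<times> AK. predecessors cmp AI AK i k) = states_with cmp AI AK"
  proof (intro equalityI subsetI)
    fix s assume "s \<in> snoc_pair ` (SIGMA (i, k):AI \<times> AK. predecessors cmp AI AK i k)"
    then obtain i k c d where "(c, d) \<in> states cmp" and "s = (c @ [i], d @ [k])"
      and "insert i (set c) = AI" "insert k (set d) = AK"
      by (auto simp: snoc_pair_def predecessors_def)
    then show "s \<in> states_with cmp AI AK"
      using indep by (simp add: states_with_def states_def)
  next
    fix s assume "s \<in> states_with cmp AI AK"
    then obtain c0 d0 where "s = (c0, d0)" and "(c0, d0) \<in> states cmp"
      and "set c0 = AI" "set d0 = AK"
      by (cases s) (auto simp: states_with_def)
    moreover obtain c i where "c0 = c @ [i]"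
      using \<open>set c0 = AI\<close> \<open>AI \<noteq> {}\<close> by (metis rev_exhaust set_empty)
    moreover obtain d k where "d0 = d @ [k]"
      using \<open>set d0 = AK\<close> \<open>AK \<noteq> {}\<close> by (metis rev_exhaust set_empty)
    ultimately have "((i, k), (c, d)) \<in> (SIGMA (i, k):AI \<times> AK. predecessors cmp AI AK i k)"
      and "s = snoc_pair ((i, k), (c, d))"
      by (auto simp: snoc_pair_def predecessors_def states_def)
    then show "s \<in> snoc_pair ` (SIGMA (i, k):AI \<times> AK. predecessors cmp AI AK i k)"
      by blast
  qed
qed

lemma insert_eq_iff_eq_or_Diff: "insert a X = A \<longleftrightarrow> a \<in> A \<and> (X = A \<or> X = A - {a})"
  by auto

lemma infsum_predecessors:
  fixes f :: "'i list \<times> 'k list \<Rightarrow> real"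
  assumes f: "f summable_on states cmp" and "i \<in> AI" "k \<in> AK"
  shows "infsum f (predecessors cmp AI AK i k)
    = infsum f (states_with cmp AI AK) + infsum f (states_with cmp (AI - {i}) AK)
    + infsum f (states_with cmp AI (AK - {k})) + infsum f (states_with cmp (AI - {i}) (AK - {k}))"
proof -
  let ?S = "states_with cmp"
  have ne: "AI \<noteq> AI - {i}" "AK \<noteq> AK - {k}" "AI - {i} \<noteq> AI" "AK - {k} \<noteq> AK"
    using assms by auto
  have summable: "f summable_on X" if "X \<subseteq> states cmp" for X
    using summable_on_subset_banach[OF f that] .
  have "predecessors cmp AI AK i k =
      ?S AI AK \<union> ?S (AI - {i}) AK \<union> ?S AI (AK - {k}) \<union> ?S (AI - {i}) (AK - {k})"
    using assms by (simp only: predecessors_def states_with_def insert_eq_iff_eq_or_Diff) blast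
  also have "infsum f \<dots> =
      infsum f (?S AI AK \<union> ?S (AI - {i}) AK \<union> ?S AI (AK - {k})) + infsum f (?S (AI - {i}) (AK - {k}))"
    by (rule infsum_Un_disjoint)
      (simp_all add: summable states_with_subset Int_Un_distrib2 states_with_disjoint ne)
  also have "infsum f (?S AI AK \<union> ?S (AI - {i}) AK \<union> ?S AI (AK - {k})) =
      infsum f (?S AI AK \<union> ?S (AI - {i}) AK) + infsum f (?S AI (AK - {k}))"
    by (rule infsum_Un_disjoint)
      (simp_all add: summable states_with_subset Int_Un_distrib2 states_with_disjoint ne)
  also have "infsum f (?S AI AK \<union> ?S (AI - {i}) AK) =
      infsum f (?S AI AK) + infsum f (?S (AI - {i}) AK)"
    by (rule infsum_Un_disjoint) (simp_all add: summable states_with_subset states_with_disjoint ne)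
  finally show ?thesis .
qed

lemma sum_sum_expand:
  fixes f :: "'a \<Rightarrow> real" and g :: "'b \<Rightarrow> real"
  shows "(\<Sum>i\<in>A. \<Sum>k\<in>B. f i * g k * (a + b i + c k + e i k)) =
   sum f A * sum g B * a + sum g B * (\<Sum>i\<in>A. f i * b i) + sum f A * (\<Sum>k\<in>B. g k * c k)
   + (\<Sum>i\<in>A. \<Sum>k\<in>B. f i * g k * e i k)"
  by (simp add: distrib_left sum.distrib sum_distrib_left sum_distrib_right mult_ac)
    (simp add: sum.swap[of _ B A])

lemma weight_balance:
  fixes lam :: "'i \<Rightarrow> real" and mu :: "'k \<Rightarrow> real" and cmp :: "'i \<Rightarrow> 'k \<Rightarrow> bool"
  defines "W \<equiv> \<lambda>A B. infsum (weight lam mu cmp) (states_with cmp A B)"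
  assumes summable: "weight lam mu cmp summable_on states cmp"
    and "finite AI" "finite AK"
    and AI_ne: "AI \<noteq> {}" and AK_ne: "AK \<noteq> {}" and indep: "\<forall>i\<in>AI. \<forall>k\<in>AK. \<not> cmp i k"
    and DK: "sum mu (Kset cmp AI) \<noteq> 0" and DI: "sum lam (Iset cmp AK) \<noteq> 0"
  shows "sum mu (Kset cmp AI) * sum lam (Iset cmp AK) * W AI AK =
    (\<Sum>i\<in>AI. \<Sum>k\<in>AK. lam i * mu k *
       (W AI AK + W (AI - {i}) AK + W AI (AK - {k}) + W (AI - {i}) (AK - {k})))"
proof -
  let ?w = "weight lam mu cmp"
  let ?P = "predecessors cmp AI AK"
  let ?D = "sum mu (Kset cmp AI) * sum lam (Iset cmp AK)"
  let ?c = "\<lambda>i k. lam i / sum mu (Kset cmp AI) * (mu k / sum lam (Iset cmp AK))"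
  have bij: "bij_betw snoc_pair (SIGMA (i, k):AI \<times> AK. ?P i k) (states_with cmp AI AK)"
    by (rule snoc_pair_bij_betw_states_with[OF AI_ne AK_ne indep])
  have "(\<lambda>x. ?w (snoc_pair x)) summable_on (SIGMA (i, k):AI \<times> AK. ?P i k)"
    using summable_on_reindex_bij_betw[OF bij, of ?w]
      summable_on_subset_banach[OF summable states_with_subset]
    by blast
  then have W_eq:
      "W AI AK = (\<Sum>(i, k)\<in>AI \<times> AK. infsum (\<lambda>s. ?w (snoc_pair ((i, k), s))) (?P i k))"
    unfolding W_def infsum_reindex_bij_betw[OF bij, symmetric]
    by (simp add: infsum_Sigma_banach[symmetric] \<open>finite AI\<close> \<open>finite AK\<close> case_prod_beta')
  have pair: "infsum (\<lambda>s. ?w (snoc_pair ((i, k), s))) (?P i k) =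
      ?c i k * (W AI AK + W (AI - {i}) AK + W AI (AK - {k}) + W (AI - {i}) (AK - {k}))"
    if "i \<in> AI" "k \<in> AK" for i k
  proof -
    have "infsum (\<lambda>s. ?w (snoc_pair ((i, k), s))) (?P i k) =
        infsum (\<lambda>s. ?w s * ?c i k) (?P i k)"
    proof (rule infsum_cong)
      fix s assume "s \<in> ?P i k"
      then show "?w (snoc_pair ((i, k), s)) = ?w s * ?c i k"
        by (cases s) (auto simp: snoc_pair_def predecessors_def states_def weight_snoc)
    qed
    also have "\<dots> = ?c i k * infsum ?w (?P i k)"
      by (subst infsum_cmult_left') (rule mult.commute)
    finally show ?thesis
      using infsum_predecessors[OF summable that] by (simp add: W_def)
  qed
  have "?D * W AI AK =
      (\<Sum>(i, k)\<in>AI \<times> AK. ?D * infsum (\<lambda>s. ?w (snoc_pair ((i, k), s))) (?P i k))"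
    by (simp only: W_eq sum_distrib_left case_prod_beta')
  also have "\<dots> = (\<Sum>(i, k)\<in>AI \<times> AK. lam i * mu k *
      (W AI AK + W (AI - {i}) AK + W AI (AK - {k}) + W (AI - {i}) (AK - {k})))"
    using DK DI by (intro sum.cong refl) (auto simp: pair)
  finally show ?thesis
    by (simp only: sum.cartesian_product)
qed

lemma Delta_weight_identity:
  fixes lam :: "'i \<Rightarrow> real" and mu :: "'k \<Rightarrow> real" and cmp :: "'i \<Rightarrow> 'k \<Rightarrow> bool"
  defines "W \<equiv> \<lambda>A B. infsum (weight lam mu cmp) (states_with cmp A B)"
  assumes "weight lam mu cmp summable_on states cmp"
    and "finite AI" "finite AK" "AI \<noteq> {}" "AK \<noteq> {}" "\<forall>i\<in>AI. \<forall>k\<in>AK. \<not> cmp i k"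
    and "sum mu (Kset cmp AI) \<noteq> 0" "sum lam (Iset cmp AK) \<noteq> 0"
  shows "Delta lam mu cmp AI AK * W AI AK =
           sum mu AK * (\<Sum>i\<in>AI. lam i * W (AI - {i}) AK)
         + sum lam AI * (\<Sum>k\<in>AK. mu k * W AI (AK - {k}))
         + (\<Sum>i\<in>AI. \<Sum>k\<in>AK. lam i * mu k * W (AI - {i}) (AK - {k}))"
  using weight_balance[OF assms(2-)] unfolding W_def Delta_def left_diff_distrib sum_sum_expand
  by simp

lemma graph_connected_compatible_server:
  assumes "graph_connected cmp"
  obtains k where "cmp i k"
proof -
  have "(adj cmp)\<^sup>*\<^sup>* (Inl i) (Inr undefined)"
    using assms unfolding graph_connected_def by blast
  then obtain y where "adj cmp (Inl i) y"
    by (cases rule: converse_rtranclpE) auto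
  then show thesis
    using that by (cases y) auto
qed

lemma graph_connected_compatible_customer:
  assumes "graph_connected cmp"
  obtains i where "cmp i k"
proof -
  have "(adj cmp)\<^sup>*\<^sup>* (Inr k) (Inl undefined)"
    using assms unfolding graph_connected_def by blast
  then obtain y where "adj cmp (Inr k) y"
    by (cases rule: converse_rtranclpE) auto
  then show thesis
    using that by (cases y) auto
qed

lemma sum_Kset_pos:
  fixes mu :: "'k::finite \<Rightarrow> real" and cmp :: "'i \<Rightarrow> 'k \<Rightarrow> bool"
  assumes "graph_connected cmp" "\<forall>k. mu k > 0" "A \<noteq> {}"
  shows "sum mu (Kset cmp A) > 0"
proof -
  obtain i where "i \<in> A"
    using assms(3) by blast
  moreover obtain k where "cmp i k"
    using graph_connected_compatible_server[OF assms(1)] .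
  ultimately have "k \<in> Kset cmp A"
    unfolding Kset_def by blast
  then show ?thesis
    using assms(2) by (intro sum_pos2) (auto intro: less_imp_le)
qed

lemma sum_Iset_pos:
  fixes lam :: "'i::finite \<Rightarrow> real" and cmp :: "'i \<Rightarrow> 'k \<Rightarrow> bool"
  assumes "graph_connected cmp" "\<forall>i. lam i > 0" "B \<noteq> {}"
  shows "sum lam (Iset cmp B) > 0"
proof -
  obtain k where "k \<in> B"
    using assms(3) by blast
  moreover obtain i where "cmp i k"
    using graph_connected_compatible_customer[OF assms(1)] .
  ultimately have "i \<in> Iset cmp B"
    unfolding Iset_def by blast
  then show ?thesis
    using assms(2) by (intro sum_pos2) (auto intro: less_imp_le)
qed

theorem proposition1:
  fixes lam :: "'i::finite \<Rightarrow> real" and mu :: "'k::finite \<Rightarrow> real"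
    and cmp :: "'i \<Rightarrow> 'k \<Rightarrow> bool"
    and AI :: "'i set" and AK :: "'k set"
  assumes conn: "graph_connected cmp"
    and lam_pos: "\<forall>i. lam i > 0" and mu_pos: "\<forall>k. mu k > 0"
    and lam_sum: "sum lam UNIV = 1" and mu_sum: "sum mu UNIV = 1"
    and stable: "\<forall>A. A \<noteq> {} \<and> A \<noteq> UNIV \<longrightarrow> sum lam A < sum mu (Kset cmp A)"
    and AI_ne: "AI \<noteq> {}" and AK_ne: "AK \<noteq> {}"
    and indep: "\<forall>i\<in>AI. \<forall>k\<in>AK. \<not> cmp i k"
  shows "Delta lam mu cmp AI AK * piA lam mu cmp AI AK =
           sum mu AK * (\<Sum>i\<in>AI. lam i * piA lam mu cmp (AI - {i}) AK)
         + sum lam AI * (\<Sum>k\<in>AK. mu k * piA lam mu cmp AI (AK - {k}))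
         + (\<Sum>i\<in>AI. \<Sum>k\<in>AK. lam i * mu k * piA lam mu cmp (AI - {i}) (AK - {k}))"
proof -
  define Z where "Z = infsum (weight lam mu cmp) (states cmp)"
  have piA_eq: "piA lam mu cmp A B = infsum (weight lam mu cmp) (states_with cmp A B) / Z" for A B
    unfolding piA_def stat_def states_with_def Z_def by (simp add: divide_inverse infsum_cmult_left')
  show ?thesis
  proof (cases "weight lam mu cmp summable_on states cmp")
    case True
    have "sum mu (Kset cmp AI) \<noteq> 0" "sum lam (Iset cmp AK) \<noteq> 0"
      using sum_Kset_pos[OF conn mu_pos AI_ne] sum_Iset_pos[OF conn lam_pos AK_ne] by simp_all
    note identity = Delta_weight_identity[OF True finite finite AI_ne AK_ne indep this]
    show ?thesis
      unfolding piA_eq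
      by (simp add: sum_divide_distrib[symmetric] add_divide_distrib[symmetric] identity[symmetric])
  next
    case False
    then have "Z = 0"
      unfolding Z_def by (rule infsum_not_exists)
    then show ?thesis
      by (simp add: piA_eq)
  qed
qed

end
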